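(* Let $X=(X_k)$ be a sequence of fuzzy numbers, $\theta=(k_r)$ a lacunary sequence, $m\ge0$ an integer, $p>0$ and $\beta\in(0,1]$. If $X\in w_p^\beta(F,\Delta^m)\cap N_\theta^\beta(p,F,\Delta^m)$ and $\limsup_r\frac{k_r}{k_{r-1}^\beta}<\infty$, then the $w_p^\beta(F,\Delta^m)$-limit and the $N_\theta^\beta(p,F,\Delta^m)$-limit of $X$ coincide.
   Context: A fuzzy number is a map $X:\mathbb{R}\to[0,1]$ which is normal, fuzzy convex, upper semicontinuous, with compact closure of $\{t:X(t)>0\}$; $L(\mathbb{R})$ is the set of fuzzy numbers. Level sets $[X]^\alpha=\{t:X(t)\ge\alpha\}$ ($\alpha\in(0,1]$), $[X]^0=\overline{\{t:X(t)>0\}}$, are compact intervals $[u^\alpha,v^\alpha]$. Subtraction: $[X-Y]^\alpha=[u_1^\alpha-v_2^\alpha,v_1^\alpha-u_2^\alpha]$. Metric: $d(X,Y)=\sup_{\alpha\in[0,1]}\max\{|u_1^\alpha-u_2^\alpha|,|v_1^\alpha-v_2^\alpha|\}$. $(\Delta^0X)_k=X_k$, $(\Delta^1X)_k=X_k-X_{k+1}$, $(\Delta^mX)_k=(\Delta^1(\Delta^{m-1}X))_k$. A lacunary sequence is an increasing integer sequence $\theta=(k_r)_{r\ge0}$ with $k_0=0$, $h_r=k_r-k_{r-1}\to\infty$; $I_r=(k_{r-1},k_r]$. $X_0\in L(\mathbb{R})$ is an $N_\theta^\beta(p,F,\Delta^m)$-limit of $X$ if $\lim_r\frac{1}{h_r^\beta}\sum_{k\in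 I_r}d(\Delta^mX_k,X_0)^p=0$; $X_0$ is a $w_p^\beta(F,\Delta^m)$-limit of $X$ if $\lim_{n\to\infty}\frac{1}{n^\beta}\sum_{k=1}^n d(\Delta^mX_k,X_0)^p=0$; the spaces consist of sequences having such a limit. *)

theory Defs
  imports "HOL-Analysis.Analysis" "HOL-Library.Liminf_Limsup"
begin

type_synonym fuzzy = "real \<Rightarrow> real"

definition fuzzy_number :: "fuzzy \<Rightarrow> bool" where
  "fuzzy_number X \<longleftrightarrow>
     (\<forall>t. 0 \<le> X t \<and> X t \<le> 1) \<and>
     (\<exists>t. X t = 1) \<and>
     (\<forall>x y (l::real). 0 \<le> l \<and> l \<le> 1 \<longrightarrow> X (l * x + (1 - l) * y) \<ge> min (X x) (X y)) \<and>
     (\<forall>a. closed {t. a \<le> X t}) \<and>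
     compact (closure {t. X t > 0})"

definition level :: "fuzzy \<Rightarrow> real \<Rightarrow> real set" where
  "level X \<alpha> = (if \<alpha> = 0 then closure {t. X t > 0} else {t. X t \<ge> \<alpha>})"

definition lo :: "fuzzy \<Rightarrow> real \<Rightarrow> real" where
  "lo X \<alpha> = Inf (level X \<alpha>)"

definition up :: "fuzzy \<Rightarrow> real \<Rightarrow> real" where
  "up X \<alpha> = Sup (level X \<alpha>)"

text \<open>Subtraction: the fuzzy number whose \<alpha>-level sets (\<alpha> in (0,1]) are
  [lo X \<alpha> - up Y \<alpha>, up X \<alpha> - lo Y \<alpha>]; its membership function is
  recovered from its level sets by the usual representation theorem.\<close>
definition fuzzy_minus :: "fuzzy \<Rightarrow> fuzzy \<Rightarrow> fuzzy" where
  "fuzzy_minus X Y = (\<lambda>t. Sup (insert 0 {\<alpha>. 0 < \<alpha> \<and> \<alpha> \<le> 1 \<and>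
        lo X \<alpha> - up Y \<alpha> \<le> t \<and> t \<le> up X \<alpha> - lo Y \<alpha>}))"

definition fdist :: "fuzzy \<Rightarrow> fuzzy \<Rightarrow> real" where
  "fdist X Y = (SUP \<alpha>\<in>{0..1}. max \<bar>lo X \<alpha> - lo Y \<alpha>\<bar> \<bar>up X \<alpha> - up Y \<alpha>\<bar>)"

fun Delta :: "nat \<Rightarrow> (nat \<Rightarrow> fuzzy) \<Rightarrow> nat \<Rightarrow> fuzzy" where
  "Delta 0 X k = X k"
| "Delta (Suc m) X k = fuzzy_minus (Delta m X k) (Delta m X (Suc k))"

definition lacunary :: "(nat \<Rightarrow> nat) \<Rightarrow> bool" where
  "lacunary \<theta> \<longleftrightarrow> \<theta> 0 = 0 \<and> strict_mono \<theta> \<and>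
     filterlim (\<lambda>r. real (\<theta> (Suc r) - \<theta> r)) at_top sequentially"

text \<open>X0 is an N_\<theta>^\<beta>(p,F,\<Delta>^m)-limit of X (r runs over r \<ge> 1, written Suc r).\<close>
definition N_theta_limit ::
  "(nat \<Rightarrow> nat) \<Rightarrow> real \<Rightarrow> real \<Rightarrow> nat \<Rightarrow> (nat \<Rightarrow> fuzzy) \<Rightarrow> fuzzy \<Rightarrow> bool" where
  "N_theta_limit \<theta> \<beta> p m X X0 \<longleftrightarrow>
     (\<lambda>r. (1 / real (\<theta> (Suc r) - \<theta> r) powr \<beta>) *
        (\<Sum>k\<in>{\<theta> r<..\<theta> (Suc r)}. fdist (Delta m X k) X0 powr p)) \<longlonglongrightarrow> 0"

definition w_limit ::
  "real \<Rightarrow> real \<Rightarrow> nat \<Rightarrow> (nat \<Rightarrow> fuzzy) \<Rightarrow> fuzzy \<Rightarrow> bool" where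
  "w_limit \<beta> p m X X0 \<longleftrightarrow>
     (\<lambda>n. (1 / real n powr \<beta>) * (\<Sum>k=1..n. fdist (Delta m X k) X0 powr p)) \<longlonglongrightarrow> 0"

end

theory Submission
  imports Defs
begin

text \<open>Let \<open>d = fdist X1 X2\<close>. The triangle inequality gives
  \<open>d\<^sup>p \<le> 2\<^sup>p (d(\<Delta>\<^sup>mX\<^sub>k, X1)\<^sup>p + d(\<Delta>\<^sup>mX\<^sub>k, X2)\<^sup>p)\<close> for every \<open>k\<close>. Since \<open>\<beta> \<le> 1\<close>, the
  hypotheses make the plain means of the first sequence over \<open>[1, n]\<close> and of the second over
  the blocks \<open>I\<^sub>r\<close> vanish. Summing over \<open>(k\<^sub>r\<^sub>0, k\<^sub>R]\<close> with \<open>k\<^sub>R \<ge> 2k\<^sub>r\<^sub>0\<close> then forces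
  \<open>d\<^sup>p \<le> 0\<close>, and a fuzzy number is determined by the endpoints of its level sets.\<close>

lemma fuzzy_numberD:
  assumes "fuzzy_number X"
  shows "0 \<le> X t" and "X t \<le> 1" and "\<exists>t. X t = 1"
    and "0 \<le> l \<Longrightarrow> l \<le> 1 \<Longrightarrow> min (X x) (X y) \<le> X (l * x + (1 - l) * y)"
    and "closed {t. a \<le> X t}" and "compact (closure {t. X t > 0})"
  using assms unfolding fuzzy_number_def by auto

text \<open>\<open>fdist\<close> is a genuine supremum only for such \<open>Y\<close>. The differences \<open>\<Delta>\<^sup>mX\<^sub>k\<close> are not
  known to be fuzzy numbers, so this weaker invariant is what is carried through \<open>Delta\<close>.\<close>
definition bounded_levels :: "fuzzy \<Rightarrow> bool" where
  "bounded_levels Y \<longleftrightarrow> (\<exists>M. \<forall>\<alpha>\<in>{0..1}. \<bar>lo Y \<alpha>\<bar> \<le> M \<and> \<bar>up Y \<alpha>\<bar> \<le> M)"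

lemma level_subset_closure_support: "\<alpha> \<in> {0..1} \<Longrightarrow> level Y \<alpha> \<subseteq> closure {t. Y t > 0}"
  by (auto simp: level_def intro!: subsetD[OF closure_subset])

text \<open>A level set may be empty; its endpoints are then the junk values \<open>Inf {}\<close>, \<open>Sup {}\<close>.\<close>
lemma bounded_levels_if_bounded_support:
  assumes "bounded (closure {t. Y t > 0})"
  shows "bounded_levels Y"
proof -
  obtain R where R: "\<forall>x\<in>closure {t. Y t > 0}. \<bar>x\<bar> \<le> R"
    using assms bounded_real by blast
  define M where "M = max R (max \<bar>Inf ({}::real set)\<bar> \<bar>Sup ({}::real set)\<bar>)"
  have "\<bar>lo Y \<alpha>\<bar> \<le> M \<and> \<bar>up Y \<alpha>\<bar> \<le> M" if \<alpha>: "\<alpha> \<in> {0..1}" for \<alpha>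
  proof (cases "level Y \<alpha> = {}")
    case True
    then show ?thesis by (simp add: lo_def up_def M_def le_max_iff_disj)
  next
    case False
    have S: "-R \<le> x \<and> x \<le> R" if "x \<in> level Y \<alpha>" for x
      using R level_subset_closure_support[OF \<alpha>] that by (force simp: abs_le_iff)
    then have "bdd_below (level Y \<alpha>)" "bdd_above (level Y \<alpha>)"
      by (meson bdd_belowI bdd_aboveI)+
    with False S have "-R \<le> lo Y \<alpha>" "lo Y \<alpha> \<le> up Y \<alpha>" "up Y \<alpha> \<le> R"
      unfolding lo_def up_def
      by (auto intro!: cInf_greatest cSup_least cInf_le_cSup)
    then show ?thesis by (simp add: M_def abs_le_iff le_max_iff_disj)
  qed
  then show ?thesis unfolding bounded_levels_def by blast
qed

lemma fuzzy_number_bounded_levels: "fuzzy_number X \<Longrightarrow> bounded_levels X"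
  by (rule bounded_levels_if_bounded_support) (rule compact_imp_bounded[OF fuzzy_numberD(6)])

lemma bounded_levels_fuzzy_minus:
  assumes "bounded_levels A" and "bounded_levels B"
  shows "bounded_levels (fuzzy_minus A B)"
proof -
  obtain MA where MA: "\<forall>\<alpha>\<in>{0..1}. \<bar>lo A \<alpha>\<bar> \<le> MA \<and> \<bar>up A \<alpha>\<bar> \<le> MA"
    using assms(1) bounded_levels_def by blast
  obtain MB where MB: "\<forall>\<alpha>\<in>{0..1}. \<bar>lo B \<alpha>\<bar> \<le> MB \<and> \<bar>up B \<alpha>\<bar> \<le> MB"
    using assms(2) bounded_levels_def by blast
  have "{t. fuzzy_minus A B t > 0} \<subseteq> {-(MA+MB)..MA+MB}"
  proof
    fix t assume "t \<in> {t. fuzzy_minus A B t > 0}"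
    moreover have "fuzzy_minus A B t = 0"
      if "{\<alpha>. 0 < \<alpha> \<and> \<alpha> \<le> 1 \<and> lo A \<alpha> - up B \<alpha> \<le> t \<and> t \<le> up A \<alpha> - lo B \<alpha>} = {}"
      unfolding fuzzy_minus_def that by simp
    ultimately have "{\<alpha>. 0 < \<alpha> \<and> \<alpha> \<le> 1 \<and> lo A \<alpha> - up B \<alpha> \<le> t \<and> t \<le> up A \<alpha> - lo B \<alpha>} \<noteq> {}"
      by auto
    then obtain \<alpha> where "0 < \<alpha>" "\<alpha> \<le> 1" and \<alpha>: "lo A \<alpha> - up B \<alpha> \<le> t" "t \<le> up A \<alpha> - lo B \<alpha>"
      by blast
    with MA MB have "\<bar>lo A \<alpha>\<bar> \<le> MA" "\<bar>up A \<alpha>\<bar> \<le> MA" "\<bar>lo B \<alpha>\<bar> \<le> MB" "\<bar>up B \<alpha>\<bar> \<le> MB"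
      by auto
    with \<alpha> show "t \<in> {-(MA+MB)..MA+MB}"
      by (simp add: abs_le_iff)
  qed
  then have "closure {t. fuzzy_minus A B t > 0} \<subseteq> {-(MA+MB)..MA+MB}"
    by (simp add: closure_minimal)
  then show ?thesis
    by (intro bounded_levels_if_bounded_support bounded_subset[OF bounded_closed_interval])
qed

lemma bounded_levels_Delta: "(\<And>k. bounded_levels (X k)) \<Longrightarrow> bounded_levels (Delta m X k)"
  by (induction m arbitrary: k) (auto intro: bounded_levels_fuzzy_minus)

lemma endpoint_dist_le_fdist:
  assumes "bounded_levels Y" and "bounded_levels Z" and "\<alpha> \<in> {0..1}"
  shows "\<bar>lo Y \<alpha> - lo Z \<alpha>\<bar> \<le> fdist Y Z" and "\<bar>up Y \<alpha> - up Z \<alpha>\<bar> \<le> fdist Y Z"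
proof -
  obtain MY where MY: "\<forall>\<alpha>\<in>{0..1}. \<bar>lo Y \<alpha>\<bar> \<le> MY \<and> \<bar>up Y \<alpha>\<bar> \<le> MY"
    using assms(1) bounded_levels_def by blast
  obtain MZ where MZ: "\<forall>\<alpha>\<in>{0..1}. \<bar>lo Z \<alpha>\<bar> \<le> MZ \<and> \<bar>up Z \<alpha>\<bar> \<le> MZ"
    using assms(2) bounded_levels_def by blast
  have "bdd_above ((\<lambda>\<alpha>. max \<bar>lo Y \<alpha> - lo Z \<alpha>\<bar> \<bar>up Y \<alpha> - up Z \<alpha>\<bar>) ` {0..1})"
    by (rule bdd_aboveI2[where M = "MY + MZ"]) (use MY MZ in \<open>fastforce simp: abs_le_iff\<close>)
  then have "max \<bar>lo Y \<alpha> - lo Z \<alpha>\<bar> \<bar>up Y \<alpha> - up Z \<alpha>\<bar> \<le> fdist Y Z"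
    unfolding fdist_def using assms(3) by (rule cSUP_upper2) simp
  then show "\<bar>lo Y \<alpha> - lo Z \<alpha>\<bar> \<le> fdist Y Z" and "\<bar>up Y \<alpha> - up Z \<alpha>\<bar> \<le> fdist Y Z"
    by simp_all
qed

lemma fdist_nonneg: "bounded_levels Y \<Longrightarrow> bounded_levels Z \<Longrightarrow> 0 \<le> fdist Y Z"
  using endpoint_dist_le_fdist(1)[of Y Z 0] by force

lemma fdist_triangle:
  assumes "bounded_levels Y" and "bounded_levels A" and "bounded_levels B"
  shows "fdist A B \<le> fdist Y A + fdist Y B"
  unfolding fdist_def[of A B]
proof (rule cSUP_least)
  fix \<alpha> :: real assume "\<alpha> \<in> {0..1}"
  then have "\<bar>lo Y \<alpha> - lo A \<alpha>\<bar> \<le> fdist Y A" "\<bar>up Y \<alpha> - up A \<alpha>\<bar> \<le> fdist Y A"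
    "\<bar>lo Y \<alpha> - lo B \<alpha>\<bar> \<le> fdist Y B" "\<bar>up Y \<alpha> - up B \<alpha>\<bar> \<le> fdist Y B"
    using endpoint_dist_le_fdist[OF assms(1,2)] endpoint_dist_le_fdist[OF assms(1,3)] by auto
  then show "max \<bar>lo A \<alpha> - lo B \<alpha>\<bar> \<bar>up A \<alpha> - up B \<alpha>\<bar> \<le> fdist Y A + fdist Y B"
    by (simp add: abs_le_iff)
qed simp

lemma fdist_powr_le:
  assumes "bounded_levels Y" and "bounded_levels A" and "bounded_levels B" and "0 < p"
  shows "fdist A B powr p \<le> 2 powr p * (fdist Y A powr p + fdist Y B powr p)"
proof -
  let ?f1 = "fdist Y A" and ?f2 = "fdist Y B"
  have nonneg: "0 \<le> fdist A B" "0 \<le> ?f1" "0 \<le> ?f2"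
    using assms fdist_nonneg by auto
  have "fdist A B \<le> 2 * max ?f1 ?f2"
    using fdist_triangle[OF assms(1-3)] by linarith
  then have "fdist A B powr p \<le> (2 * max ?f1 ?f2) powr p"
    using nonneg assms(4) by (intro powr_mono2) auto
  also have "\<dots> = 2 powr p * max ?f1 ?f2 powr p"
    using nonneg by (simp add: powr_mult)
  also have "\<dots> \<le> 2 powr p * (?f1 powr p + ?f2 powr p)"
    by (intro mult_left_mono) (auto simp: max_def)
  finally show ?thesis .
qed

lemma fuzzy_number_upper_level_eq:
  assumes X: "fuzzy_number X" and "0 < \<alpha>" "\<alpha> \<le> 1"
  shows "{t. \<alpha> \<le> X t} = {lo X \<alpha>..up X \<alpha>}"
proof -
  let ?S = "{t. \<alpha> \<le> X t}"
  have lv: "level X \<alpha> = ?S" using assms by (simp add: level_def)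
  obtain t1 where "X t1 = 1" using fuzzy_numberD(3)[OF X] by blast
  then have "t1 \<in> ?S" using assms(3) by simp
  then have ne: "?S \<noteq> {}" by blast
  have "?S \<subseteq> {t. X t > 0}"
    using assms(2) by auto
  then have "?S \<subseteq> closure {t. X t > 0}"
    using closure_subset by (rule order_trans)
  moreover have "bounded (closure {t. X t > 0})"
    using fuzzy_numberD(6)[OF X] by (rule compact_imp_bounded)
  ultimately have "bounded ?S"
    by (rule bounded_subset[rotated])
  then have bdd: "bdd_below ?S" "bdd_above ?S"
    by (simp_all add: bounded_imp_bdd_below bounded_imp_bdd_above)
  have closed: "closed ?S" using X by (rule fuzzy_numberD(5))
  have ends: "lo X \<alpha> \<in> ?S" "up X \<alpha> \<in> ?S"
    unfolding lo_def up_def lv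
    using closed_contains_Inf[OF ne bdd(1) closed] closed_contains_Sup[OF ne bdd(2) closed]
    by simp_all
  have "t \<in> ?S" if t: "lo X \<alpha> \<le> t" "t \<le> up X \<alpha>" for t
  proof (cases "lo X \<alpha> = up X \<alpha>")
    case True
    then have "t = lo X \<alpha>" using t by linarith
    then show ?thesis using ends by simp
  next
    case False
    then have lt: "lo X \<alpha> < up X \<alpha>" using t by linarith
    define l where "l = (up X \<alpha> - t) / (up X \<alpha> - lo X \<alpha>)"
    have l: "0 \<le> l" "l \<le> 1"
      unfolding l_def using lt t by (simp_all add: divide_le_eq)
    have "l * (up X \<alpha> - lo X \<alpha>) = up X \<alpha> - t"
      using lt by (simp add: l_def)
    then have comb: "l * lo X \<alpha> + (1 - l) * up X \<alpha> = t"
      by (simp add: algebra_simps)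
    from fuzzy_numberD(4)[OF X l, of "lo X \<alpha>" "up X \<alpha>"] have "min (X (lo X \<alpha>)) (X (up X \<alpha>)) \<le> X t"
      unfolding comb .
    then show ?thesis using ends by auto
  qed
  moreover have "lo X \<alpha> \<le> t \<and> t \<le> up X \<alpha>" if "t \<in> ?S" for t
    unfolding lo_def up_def lv using cInf_lower[OF that bdd(1)] cSup_upper[OF that bdd(2)] by simp
  ultimately show ?thesis
    by (intro set_eqI iffI) (simp_all only: atLeastAtMost_iff)
qed

lemma fuzzy_number_eqI_fdist:
  assumes X: "fuzzy_number X" and Y: "fuzzy_number Y" and "fdist X Y = 0"
  shows "X = Y"
proof -
  have levels: "{t. \<alpha> \<le> X t} = {t. \<alpha> \<le> Y t}" if "0 < \<alpha>" "\<alpha> \<le> 1" for \<alpha>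
  proof -
    have "lo X \<alpha> = lo Y \<alpha>" "up X \<alpha> = up Y \<alpha>"
      using endpoint_dist_le_fdist[OF fuzzy_number_bounded_levels[OF X]
          fuzzy_number_bounded_levels[OF Y], of \<alpha>] that assms(3) by auto
    then show ?thesis
      using fuzzy_number_upper_level_eq[OF X that] fuzzy_number_upper_level_eq[OF Y that] by simp
  qed
  have le: "Z t \<le> W t" if "fuzzy_number Z" "fuzzy_number W"
      "\<And>\<alpha>. 0 < \<alpha> \<Longrightarrow> \<alpha> \<le> 1 \<Longrightarrow> {t. \<alpha> \<le> Z t} = {t. \<alpha> \<le> W t}" for Z W t
  proof (cases "Z t > 0")
    case True
    have "Z t \<le> 1" using that(1) by (rule fuzzy_numberD(2))
    with True that(3)[of "Z t"] show ?thesis by blast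
  next
    case False
    moreover have "0 \<le> W t" using that(2) by (rule fuzzy_numberD(1))
    ultimately show ?thesis by linarith
  qed
  show ?thesis
    using le[OF X Y levels] le[OF Y X levels[symmetric]] by (simp add: fun_eq_iff antisym)
qed

lemma tendsto_zero_rescale_powr:
  fixes s x :: "nat \<Rightarrow> real"
  assumes "\<And>n. 0 \<le> s n" and "eventually (\<lambda>n. 1 \<le> x n) sequentially" and "\<beta> \<le> 1"
    and "(\<lambda>n. 1 / x n powr \<beta> * s n) \<longlonglongrightarrow> 0"
  shows "(\<lambda>n. s n / x n) \<longlonglongrightarrow> 0"
proof (rule tendsto_sandwich[OF _ _ tendsto_const assms(4)])
  show "eventually (\<lambda>n. 0 \<le> s n / x n) sequentially"
    using assms(2) by eventually_elim (simp add: assms(1))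
  show "eventually (\<lambda>n. s n / x n \<le> 1 / x n powr \<beta> * s n) sequentially"
    using assms(2)
  proof eventually_elim
    case (elim n)
    then have "x n powr \<beta> \<le> x n powr 1"
      using assms(3) by (intro powr_mono) auto
    then show ?case
      using elim assms(1)[of n] by (simp add: divide_left_mono)
  qed
qed

lemma sum_lacunary_blocks_le:
  fixes b :: "nat \<Rightarrow> real"
  assumes "mono \<theta>"
    and "\<And>r. r \<ge> r0 \<Longrightarrow> (\<Sum>k\<in>{\<theta> r<..\<theta> (Suc r)}. b k) \<le> e * (real (\<theta> (Suc r)) - real (\<theta> r))"
  shows "(\<Sum>k\<in>{\<theta> r0<..\<theta> (r0 + d)}. b k) \<le> e * (real (\<theta> (r0 + d)) - real (\<theta> r0))"
proof (induction d)
  case 0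
  then show ?case by simp
next
  case (Suc d)
  have "\<theta> r0 \<le> \<theta> (r0 + d)" "\<theta> (r0 + d) \<le> \<theta> (Suc (r0 + d))"
    using assms(1) by (simp_all add: monoD)
  then have "{\<theta> r0<..\<theta> (r0 + Suc d)} = {\<theta> r0<..\<theta> (r0 + d)} \<union> {\<theta> (r0 + d)<..\<theta> (Suc (r0 + d))}"
    by auto
  then have "(\<Sum>k\<in>{\<theta> r0<..\<theta> (r0 + Suc d)}. b k) =
      (\<Sum>k\<in>{\<theta> r0<..\<theta> (r0 + d)}. b k) + (\<Sum>k\<in>{\<theta> (r0 + d)<..\<theta> (Suc (r0 + d))}. b k)"
    by (simp add: sum.union_disjoint ivl_disj_int_two)
  also have "\<dots> \<le> e * (real (\<theta> (r0 + d)) - real (\<theta> r0))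
      + e * (real (\<theta> (Suc (r0 + d))) - real (\<theta> (r0 + d)))"
    using Suc.IH assms(2)[of "r0 + d"] by (intro add_mono) auto
  finally show ?case by (simp add: algebra_simps)
qed

lemma le_zero_if_le_sum_of_vanishing_means:
  fixes a b :: "nat \<Rightarrow> real" and \<theta> :: "nat \<Rightarrow> nat"
  assumes a_nonneg: "\<And>k. 0 \<le> a k" and "strict_mono \<theta>"
    and a_mean: "(\<lambda>n. (\<Sum>k=1..n. a k) / real n) \<longlonglongrightarrow> 0"
    and b_mean: "(\<lambda>r. (\<Sum>k\<in>{\<theta> r<..\<theta> (Suc r)}. b k) / real (\<theta> (Suc r) - \<theta> r)) \<longlonglongrightarrow> 0"
    and bound: "\<And>k. D \<le> a k + b k"
  shows "D \<le> 0"
proof (rule ccontr)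
  assume "\<not> D \<le> 0"
  define e where "e = D / 4"
  have e: "0 < e" using \<open>\<not> D \<le> 0\<close> by (simp add: e_def)
  obtain n0 where n0: "\<And>n. n \<ge> n0 \<Longrightarrow> (\<Sum>k=1..n. a k) / real n < e"
    using order_tendstoD(2)[OF a_mean e] by (auto simp: eventually_sequentially)
  obtain r0 where r0: "\<And>r. r \<ge> r0 \<Longrightarrow>
      (\<Sum>k\<in>{\<theta> r<..\<theta> (Suc r)}. b k) / real (\<theta> (Suc r) - \<theta> r) < e"
    using order_tendstoD(2)[OF b_mean e] by (auto simp: eventually_sequentially)
  have "(\<Sum>k\<in>{\<theta> r<..\<theta> (Suc r)}. b k) \<le> e * (real (\<theta> (Suc r)) - real (\<theta> r))"
    if "r \<ge> r0" for r
  proof -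
    have "\<theta> r < \<theta> (Suc r)" using \<open>strict_mono \<theta>\<close> by (simp add: strict_mono_def)
    then show ?thesis
      using r0[OF that] by (simp add: of_nat_diff pos_divide_less_eq)
  qed
  then have b_blocks: "(\<Sum>k\<in>{\<theta> r0<..\<theta> (r0 + d)}. b k) \<le> e * (real (\<theta> (r0 + d)) - real (\<theta> r0))"
    for d
    using \<open>strict_mono \<theta>\<close> by (intro sum_lacunary_blocks_le) (auto intro: strict_mono_mono)
  define d where "d = n0 + 2 * \<theta> r0 + 1"
  define n where "n = \<theta> (r0 + d)"
  have "r0 + d \<le> n"
    unfolding n_def using \<open>strict_mono \<theta>\<close> by (rule strict_mono_imp_increasing)
  then have n: "n \<ge> n0" "n \<ge> 2 * \<theta> r0 + 1" unfolding d_def by auto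
  define L where "L = real n - real (\<theta> r0)"
  have L: "0 < L" "real n \<le> 2 * L" using n by (auto simp: L_def)
  have a_sum: "(\<Sum>k\<in>{\<theta> r0<..n}. a k) \<le> e * real n"
  proof -
    have "(\<Sum>k\<in>{\<theta> r0<..n}. a k) \<le> (\<Sum>k=1..n. a k)"
      by (rule sum_mono2) (auto simp: a_nonneg)
    also have "\<dots> \<le> e * real n"
      using n0[OF n(1)] n(2) by (simp add: pos_divide_less_eq)
    finally show ?thesis .
  qed
  have "D * L = (\<Sum>k\<in>{\<theta> r0<..n}. D)"
    using n by (simp add: L_def of_nat_diff)
  also have "\<dots> \<le> (\<Sum>k\<in>{\<theta> r0<..n}. a k) + (\<Sum>k\<in>{\<theta> r0<..n}. b k)"
    unfolding sum.distrib[symmetric] by (rule sum_mono) (rule bound)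
  also have "\<dots> \<le> e * real n + e * L"
    using a_sum b_blocks[of d] unfolding n_def L_def by (rule add_mono)
  also have "\<dots> \<le> e * (2 * L) + e * L"
    using L e by simp
  also have "\<dots> < D * L"
    using L e by (simp add: e_def)
  finally show False by simp
qed

theorem theorem2p16:
  fixes X :: "nat \<Rightarrow> fuzzy" and \<theta> :: "nat \<Rightarrow> nat" and m :: nat
    and p \<beta> :: real and X1 X2 :: fuzzy
  assumes "\<And>k. fuzzy_number (X k)"
    and "lacunary \<theta>"
    and "0 < p" and "0 < \<beta>" and "\<beta> \<le> 1"
    and "fuzzy_number X1" and "w_limit \<beta> p m X X1"
    and "fuzzy_number X2" and "N_theta_limit \<theta> \<beta> p m X X2"
    and "limsup (\<lambda>r. ereal (real (\<theta> (Suc r)) / real (\<theta> r) powr \<beta>)) < \<infinity>"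
  shows "X1 = X2"
proof -
  have bounded: "bounded_levels (Delta m X k)" "bounded_levels X1" "bounded_levels X2" for k
    using assms(1,6,8) by (simp_all add: bounded_levels_Delta fuzzy_number_bounded_levels)
  have "strict_mono \<theta>" using assms(2) by (simp add: lacunary_def)
  then have "\<forall>r. 1 \<le> real (\<theta> (Suc r) - \<theta> r)"
    by (simp add: strict_mono_def Suc_leI)
  have "fdist X1 X2 powr p / 2 powr p \<le> 0"
  proof (rule le_zero_if_le_sum_of_vanishing_means[OF _ \<open>strict_mono \<theta>\<close>])
    show "(\<lambda>n. (\<Sum>k=1..n. fdist (Delta m X k) X1 powr p) / real n) \<longlonglongrightarrow> 0"
      using assms(5,7) unfolding w_limit_def
      by (intro tendsto_zero_rescale_powr) (auto simp: sum_nonneg eventually_sequentially)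
    show "(\<lambda>r. (\<Sum>k\<in>{\<theta> r<..\<theta> (Suc r)}. fdist (Delta m X k) X2 powr p)
        / real (\<theta> (Suc r) - \<theta> r)) \<longlonglongrightarrow> 0"
      using assms(5,9) \<open>\<forall>r. 1 \<le> real (\<theta> (Suc r) - \<theta> r)\<close> unfolding N_theta_limit_def
      by (intro tendsto_zero_rescale_powr) (auto simp: sum_nonneg)
    show "fdist X1 X2 powr p / 2 powr p
        \<le> fdist (Delta m X k) X1 powr p + fdist (Delta m X k) X2 powr p" for k
      using fdist_powr_le[OF bounded assms(3)] by (simp add: divide_le_eq mult.commute)
  qed simp
  then have "fdist X1 X2 = 0"
    by (simp add: divide_le_0_iff)
  then show ?thesis
    using assms(6,8) by (rule fuzzy_number_eqI_fdist[rotated 2])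
qed

end
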